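(* Let $(X,p_X)$ be a non-empty partial metric space. Then there exists a partial metric space $(Y,p_Y)$ with $X\subseteq Y$ and $p_Y$ restricting to $p_X$ on $X\times X$, such that $X$ is dense in $Y$ but $X$ is not symmetrically dense in $Y$.
   Context: A partial metric on a set $X$ is a function $p_X\colon X\times X\to\mathbb{R}_{\geq0}$ such that for all $x,y,z\in X$: (P1) $p_X(x,x)=p_X(x,y)=p_X(y,y)$ implies $x=y$; (P2) $p_X(x,x)\leq p_X(x,y)$; (P3) $p_X(x,y)=p_X(y,x)$; (P4) $p_X(x,z)+p_X(y,y)\leq p_X(x,y)+p_X(y,z)$. For $x\in X$ and $\varepsilon>0$, the open ball is $B_\varepsilon(x)=\{y\in X: p_X(x,y)<p_X(x,x)+\varepsilon\}$. A subset $A\subseteq X$ is dense in $X$ if for every $x\in X$ and every $\varepsilon>0$ there is $y\in A$ with $y\in B_\varepsilon(x)$. It is symmetrically dense in $X$ if for every $x\in X$ and every $\varepsilon>0$ there is $y\in A$ with $x\in B_\varepsilon(y)$ and $y\in B_\varepsilon(x)$. *)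

theory Defs
  imports Complex_Main
begin

definition partial_metric_on :: "'a set \<Rightarrow> ('a \<Rightarrow> 'a \<Rightarrow> real) \<Rightarrow> bool" where
  "partial_metric_on X p \<longleftrightarrow>
     (\<forall>x\<in>X. \<forall>y\<in>X. p x y \<ge> 0) \<and>
     (\<forall>x\<in>X. \<forall>y\<in>X. p x x = p x y \<and> p x y = p y y \<longrightarrow> x = y) \<and>
     (\<forall>x\<in>X. \<forall>y\<in>X. p x x \<le> p x y) \<and>
     (\<forall>x\<in>X. \<forall>y\<in>X. p x y = p y x) \<and>
     (\<forall>x\<in>X. \<forall>y\<in>X. \<forall>z\<in>X. p x z + p y y \<le> p x y + p y z)"

definition pball :: "'a set \<Rightarrow> ('a \<Rightarrow> 'a \<Rightarrow> real) \<Rightarrow> 'a \<Rightarrow> real \<Rightarrow> 'a set" where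
  "pball X p x e = {y\<in>X. p x y < p x x + e}"

definition pdense_in :: "'a set \<Rightarrow> 'a set \<Rightarrow> ('a \<Rightarrow> 'a \<Rightarrow> real) \<Rightarrow> bool" where
  "pdense_in A X p \<longleftrightarrow> (\<forall>x\<in>X. \<forall>e>0. \<exists>y\<in>A. y \<in> pball X p x e)"

definition psym_dense_in :: "'a set \<Rightarrow> 'a set \<Rightarrow> ('a \<Rightarrow> 'a \<Rightarrow> real) \<Rightarrow> bool" where
  "psym_dense_in A X p \<longleftrightarrow>
     (\<forall>x\<in>X. \<forall>e>0. \<exists>y\<in>A. x \<in> pball X p y e \<and> y \<in> pball X p x e)"

end

theory Submission
  imports Defs
begin

(* Adjoin to X a copy None of a point a whose partial distances, its self-distance included,
   are all raised by c > 0.  Every ball about None contains a, so X stays dense; but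
   p x None = p x a + c \<ge> p x x + c, so None lies in no ball of radius c about a point of X. *)

definition raised_copy :: "('a \<Rightarrow> 'a \<Rightarrow> real) \<Rightarrow> 'a \<Rightarrow> real \<Rightarrow> 'a option \<Rightarrow> 'a option \<Rightarrow> real" where
  "raised_copy p a c u v =
     p (case_option a id u) (case_option a id v) + (if u = None \<or> v = None then c else 0)"

lemma raised_copy_simps [simp]:
  "raised_copy p a c (Some x) (Some y) = p x y"
  "raised_copy p a c (Some x) None = p x a + c"
  "raised_copy p a c None (Some y) = p a y + c"
  "raised_copy p a c None None = p a a + c"
  by (simp_all add: raised_copy_def)

lemma partial_metric_on_raised_copy:
  assumes pm: "partial_metric_on X p" and "a \<in> X" and "c > 0"
  shows "partial_metric_on (insert None (Some ` X)) (raised_copy p a c)"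
proof -
  let ?Y = "insert None (Some ` X)" and ?q = "raised_copy p a c" and ?h = "case_option a id"
  have h_in_X: "?h u \<in> X" if "u \<in> ?Y" for u
    using that \<open>a \<in> X\<close> by auto
  have nonneg: "p x y \<ge> 0" and small_self: "p x x \<le> p x y" and sym: "p x y = p y x"
    if "x \<in> X" "y \<in> X" for x y
    using pm that unfolding partial_metric_on_def by blast+
  have triangle: "p x z + p y y \<le> p x y + p y z" if "x \<in> X" "y \<in> X" "z \<in> X" for x y z
    using pm that unfolding partial_metric_on_def by blast
  have separation: "x = y" if "x \<in> X" "y \<in> X" "p x x = p x y" "p x y = p y y" for x y
    using pm that unfolding partial_metric_on_def by blast
  show ?thesis
    unfolding partial_metric_on_def
  proof (intro conjI ballI impI)
    fix u v assume u: "u \<in> ?Y" and v: "v \<in> ?Y"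
    show "?q u v \<ge> 0"
      using u v \<open>a \<in> X\<close> \<open>c > 0\<close> by (auto intro!: add_nonneg_nonneg nonneg simp: less_imp_le)
    show "?q u u \<le> ?q u v"
      using u v \<open>a \<in> X\<close> \<open>c > 0\<close> by (auto simp: small_self add_increasing2)
    show "?q u v = ?q v u"
      using u v \<open>a \<in> X\<close> sym by auto
    show "u = v" if "?q u u = ?q u v \<and> ?q u v = ?q v v"
      using that u v \<open>a \<in> X\<close> \<open>c > 0\<close> separation small_self sym by (auto; smt (verit))
  next
    fix u v w assume u: "u \<in> ?Y" and v: "v \<in> ?Y" and w: "w \<in> ?Y"
    have "p (?h u) (?h w) + p (?h v) (?h v) \<le> p (?h u) (?h v) + p (?h v) (?h w)"
      using triangle h_in_X u v w by blast
    moreover have "(if u = None \<or> w = None then c else 0) + (if v = None then c else 0)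
        \<le> (if u = None \<or> v = None then c else 0) + (if v = None \<or> w = None then c else 0)"
      using \<open>c > 0\<close> by auto
    ultimately show "?q u w + ?q v v \<le> ?q u v + ?q v w"
      unfolding raised_copy_def disj_absorb by linarith
  qed
qed

lemma pdense_in_raised_copy:
  assumes "a \<in> X"
  shows "pdense_in (Some ` X) (insert None (Some ` X)) (raised_copy p a c)"
  unfolding pdense_in_def
proof (intro ballI allI impI)
  fix u :: "'a option" and e :: real
  assume "u \<in> insert None (Some ` X)" and "e > 0"
  then show "\<exists>y\<in>Some ` X. y \<in> pball (insert None (Some ` X)) (raised_copy p a c) u e"
    using assms by (cases u) (force simp: pball_def)+
qed

lemma not_psym_dense_in_raised_copy:
  assumes "partial_metric_on X p" and "a \<in> X" and "c > 0"
  shows "\<not> psym_dense_in (Some ` X) (insert None (Some ` X)) (raised_copy p a c)"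
proof
  assume "psym_dense_in (Some ` X) (insert None (Some ` X)) (raised_copy p a c)"
  then obtain x where "x \<in> X" and "None \<in> pball (insert None (Some ` X)) (raised_copy p a c) (Some x) c"
    using \<open>c > 0\<close> unfolding psym_dense_in_def by blast
  then have "p x a < p x x"
    by (simp add: pball_def)
  moreover have "p x x \<le> p x a"
    using assms(1,2) \<open>x \<in> X\<close> unfolding partial_metric_on_def by blast
  ultimately show False
    by linarith
qed

theorem lemma1p3:
  fixes X :: "'a set" and pX :: "'a \<Rightarrow> 'a \<Rightarrow> real"
  assumes "partial_metric_on X pX" and "X \<noteq> {}"
  shows "\<exists>(Y :: 'a option set) (pY :: 'a option \<Rightarrow> 'a option \<Rightarrow> real).
           partial_metric_on Y pY \<and> Some ` X \<subseteq> Y \<and>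
           (\<forall>x\<in>X. \<forall>y\<in>X. pY (Some x) (Some y) = pX x y) \<and>
           pdense_in (Some ` X) Y pY \<and> \<not> psym_dense_in (Some ` X) Y pY"
proof -
  obtain a where "a \<in> X"
    using assms(2) by blast
  let ?Y = "insert None (Some ` X)" and ?pY = "raised_copy pX a 1"
  have "partial_metric_on ?Y ?pY"
    using partial_metric_on_raised_copy[OF assms(1) \<open>a \<in> X\<close>] by simp
  moreover have "pdense_in (Some ` X) ?Y ?pY"
    using pdense_in_raised_copy[OF \<open>a \<in> X\<close>] .
  moreover have "\<not> psym_dense_in (Some ` X) ?Y ?pY"
    using not_psym_dense_in_raised_copy[OF assms(1) \<open>a \<in> X\<close>] by simp
  ultimately show ?thesis
    by force
qed

end
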